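(* Let $C\subset\mathbb{R}^d$ be a convex body and let $\Lambda\subset\mathbb{R}^d$ be a $d$-dimensional lattice. (1) There exists a convex body $K\supset C$ that is lattice complete with respect to $\Lambda$ and satisfies $\mathrm{diam}_\Lambda(K)=\mathrm{diam}_\Lambda(C)$. (2) There exists a convex body $L\subset C$ that is lattice reduced with respect to $\Lambda$ and satisfies $\mathrm{wdt}_\Lambda(L)=\mathrm{wdt}_\Lambda(C)$.
   Context: A convex body is a compact convex set with non-empty interior. A lattice $\Lambda\subset\mathbb{R}^d$ is a discrete subgroup spanning $\mathbb{R}^d$; $\Lambda^\star=\{y: x\cdot y\in\mathbb{Z}\ \forall x\in\Lambda\}$. $\mathrm{wdt}_\Lambda(C)=\min_{y\in\Lambda^\star\setminus\{0\}}\max_{a,b\in C}y\cdot(a-b)$. A segment $[a,b]$ is a lattice segment if $b-a$ is parallel to a nonzero vector of $\Lambda$; its lattice length is $|b-a|/|v|$ where $v$ generates $\Lambda\cap\mathrm{span}\{b-a\}$ and is a positive multiple of $b-a$; $\mathrm{diam}_\Lambda(C)$ is the maximum lattice length of a lattice segment in $C$. $C$ is lattice reduced if no convex body $C'\subsetneq C$ has the same lattice width; lattice complete if no convex body $C'\supsetneq C$ has the same lattice diameter. *)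

theory Defs
  imports "HOL-Analysis.Analysis"
begin

definition convex_body :: "'a::euclidean_space set \<Rightarrow> bool" where
  "convex_body C \<longleftrightarrow> compact C \<and> convex C \<and> interior C \<noteq> {}"

definition is_lattice :: "'a::euclidean_space set \<Rightarrow> bool" where
  "is_lattice L \<longleftrightarrow>
     0 \<in> L \<and> (\<forall>x\<in>L. \<forall>y\<in>L. x + y \<in> L) \<and> (\<forall>x\<in>L. - x \<in> L)
     \<and> (\<forall>x\<in>L. \<exists>e>0. \<forall>y\<in>L. y \<noteq> x \<longrightarrow> e \<le> dist y x)
     \<and> span L = UNIV"

definition dual_lattice :: "'a::euclidean_space set \<Rightarrow> 'a set" where
  "dual_lattice L = {y. \<forall>x\<in>L. x \<bullet> y \<in> \<int>}"

definition lattice_width :: "'a::euclidean_space set \<Rightarrow> 'a set \<Rightarrow> real" where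
  "lattice_width L C =
     Inf {Sup {y \<bullet> (a - b) | a b. a \<in> C \<and> b \<in> C} | y. y \<in> dual_lattice L - {0}}"

definition lattice_primitive :: "'a::euclidean_space set \<Rightarrow> 'a \<Rightarrow> bool" where
  "lattice_primitive L v \<longleftrightarrow> v \<in> L \<and> v \<noteq> 0 \<and>
     L \<inter> span {v} = range (\<lambda>k::int. of_int k *\<^sub>R v)"

definition lattice_diam :: "'a::euclidean_space set \<Rightarrow> 'a set \<Rightarrow> real" where
  "lattice_diam L C =
     Sup {norm (b - a) / norm v | a b v. a \<in> C \<and> b \<in> C \<and> lattice_primitive L v
            \<and> (\<exists>t>0. v = t *\<^sub>R (b - a))}"

definition lattice_reduced :: "'a::euclidean_space set \<Rightarrow> 'a set \<Rightarrow> bool" where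
  "lattice_reduced L C \<longleftrightarrow>
     \<not> (\<exists>C'. convex_body C' \<and> C' \<subset> C \<and> lattice_width L C' = lattice_width L C)"

definition lattice_complete :: "'a::euclidean_space set \<Rightarrow> 'a set \<Rightarrow> bool" where
  "lattice_complete L C \<longleftrightarrow>
     \<not> (\<exists>C'. convex_body C' \<and> C \<subset> C' \<and> lattice_diam L C' = lattice_diam L C)"

end

theory Submission
  imports Defs
begin

text \<open>Both bodies come from Zorn's lemma: \<open>K\<close> is a maximal convex body containing \<open>C\<close> with
  the lattice diameter of \<open>C\<close>, and \<open>M\<close> a minimal convex body inside \<open>C\<close> with the lattice
  width of \<open>C\<close>.

  For an increasing chain the closure of the union is an upper bound. It is bounded, because
  a convex set containing a fixed ball and escaping to infinity along a direction \<open>u\<close>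
  contains arbitrarily long segments parallel to any lattice vector close to the ray
  \<open>\<real>\<^sub>+ u\<close>, and such vectors exist by Dirichlet approximation. Taking the closure does
  not increase the lattice diameter, since segments of the closure can be shrunk into the
  interior.

  For a decreasing chain the intersection is a lower bound. By compactness it keeps the
  common width of the chain in every dual lattice direction, and a compact convex set of
  positive lattice width has interior points: otherwise it lies in a hyperplane, and a dual lattice vector
  close to the normal direction (Dirichlet approximation in the dual lattice) has small width
  on it.\<close>

section \<open>Lattices and their duals\<close>

definition additive_subgroup :: "'a::real_vector set \<Rightarrow> bool" where
  "additive_subgroup G \<longleftrightarrow> 0 \<in> G \<and> (\<forall>x\<in>G. \<forall>y\<in>G. x + y \<in> G) \<and> (\<forall>x\<in>G. - x \<in> G)"

lemma additive_subgroup_diff: "additive_subgroup G \<Longrightarrow> x \<in> G \<Longrightarrow> y \<in> G \<Longrightarrow> x - y \<in> G"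
  unfolding additive_subgroup_def by (metis diff_conv_add_uminus)

lemma additive_subgroup_scaleR_nat: "additive_subgroup G \<Longrightarrow> x \<in> G \<Longrightarrow> of_nat n *\<^sub>R x \<in> G"
  by (induction n) (auto simp: additive_subgroup_def algebra_simps)

lemma additive_subgroup_scaleR_int:
  assumes "additive_subgroup G" "x \<in> G" shows "of_int k *\<^sub>R x \<in> G"
proof (cases "k \<ge> 0")
  case True
  then show ?thesis using additive_subgroup_scaleR_nat[OF assms, of "nat k"] by simp
next
  case False
  have "- (of_nat (nat (- k)) *\<^sub>R x) \<in> G"
    using additive_subgroup_scaleR_nat[OF assms] assms(1) by (simp add: additive_subgroup_def)
  then show ?thesis using False by simp
qed

lemma additive_subgroup_int_combination:
  assumes "additive_subgroup G" "finite B" "B \<subseteq> G"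
  shows "(\<Sum>b\<in>B. of_int (n b) *\<^sub>R b) \<in> G"
  using assms(2,3)
proof (induction B rule: finite_induct)
  case empty then show ?case using assms(1) by (simp add: additive_subgroup_def)
next
  case (insert x F)
  then show ?case using assms(1) additive_subgroup_scaleR_int[of G x "n x"]
    by (simp add: additive_subgroup_def)
qed

lemma additive_subgroup_lattice: "is_lattice L \<Longrightarrow> additive_subgroup L"
  unfolding is_lattice_def additive_subgroup_def by blast

lemma lattice_norm_lower_bound:
  assumes "is_lattice L"
  obtains e where "e > 0" "\<And>y. y \<in> L \<Longrightarrow> y \<noteq> 0 \<Longrightarrow> e \<le> norm y"
proof -
  obtain e where "e > 0" "\<forall>y\<in>L. y \<noteq> 0 \<longrightarrow> e \<le> dist y 0"
    using assms unfolding is_lattice_def by blast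
  then show ?thesis using that by auto
qed

lemma span_UNIV_nonzero:
  fixes S :: "'a::euclidean_space set"
  assumes "span S = UNIV"
  obtains v where "v \<in> S" "v \<noteq> 0"
proof -
  have "\<not> S \<subseteq> {0}"
  proof
    assume "S \<subseteq> {0}"
    then have "span S \<subseteq> {0}" using span_mono[of S "{0}"] by simp
    then show False using assms nonempty_Basis nonzero_Basis by blast
  qed
  then show ?thesis using that by blast
qed

lemma lattice_independent_spanning_subset:
  assumes "is_lattice L"
  obtains B where "finite B" "B \<subseteq> L" "independent B" "span B = UNIV"
proof -
  obtain B where B: "B \<subseteq> L" "independent B" "L \<subseteq> span B"
    by (rule basis_exists[of L])
  have "span L \<subseteq> span B" using B(3) by (simp add: span_minimal)
  then have "span B = UNIV" using assms by (auto simp: is_lattice_def)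
  moreover have "finite B" using B(2) independent_bound by blast
  ultimately show ?thesis using that B by blast
qed

lemma finite_lattice_Int_bounded:
  assumes L: "is_lattice L" and S: "bounded S"
  shows "finite (L \<inter> S)"
proof (rule ccontr)
  assume inf: "infinite (L \<inter> S)"
  obtain e where e: "e > 0" "\<And>y. y \<in> L \<Longrightarrow> y \<noteq> 0 \<Longrightarrow> e \<le> norm y"
    using lattice_norm_lower_bound[OF L] by blast
  have "bounded (L \<inter> S)" using S by (simp add: bounded_Int)
  then obtain x where "x islimpt (L \<inter> S)"
    using bounded_infinite_imp_islimpt[OF subset_refl _ inf] by blast
  then have inf2: "infinite (L \<inter> S \<inter> ball x (e/2))" using e(1) by (simp add: islimpt_eq_infinite_ball)
  then obtain a where a: "a \<in> L \<inter> S \<inter> ball x (e/2)"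
    using infinite_imp_nonempty by blast
  have "infinite (L \<inter> S \<inter> ball x (e/2) - {a})" using inf2 by simp
  then obtain b where b: "b \<in> L \<inter> S \<inter> ball x (e/2) - {a}"
    using infinite_imp_nonempty by blast
  have ab: "a \<in> L \<inter> ball x (e/2)" "b \<in> L \<inter> ball x (e/2)" "a \<noteq> b" using a b by auto
  have "e \<le> norm (a - b)"
    using ab e(2) additive_subgroup_diff[OF additive_subgroup_lattice[OF L]] by auto
  moreover have "norm (a - b) < e" using ab dist_triangle_half_l[of a x e b]
    by (auto simp: dist_norm norm_minus_commute)
  ultimately show False by simp
qed

lemma int_combination_near:
  fixes B :: "'a::euclidean_space set"
  assumes "finite B" "span B = UNIV"
  obtains n :: "'a \<Rightarrow> 'a \<Rightarrow> int"
    where "\<And>x. norm (x - (\<Sum>b\<in>B. of_int (n x b) *\<^sub>R b)) \<le> (\<Sum>b\<in>B. norm b)"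
proof -
  have "\<forall>x. \<exists>c. x = (\<Sum>b\<in>B. c b *\<^sub>R b)"
    using assms span_finite[of B] by auto
  then obtain c where c: "\<And>x. x = (\<Sum>b\<in>B. c x b *\<^sub>R b)" by metis
  have "norm (x - (\<Sum>b\<in>B. of_int \<lfloor>c x b\<rfloor> *\<^sub>R b)) \<le> (\<Sum>b\<in>B. norm b)" for x
  proof -
    have "x - (\<Sum>b\<in>B. of_int \<lfloor>c x b\<rfloor> *\<^sub>R b) = (\<Sum>b\<in>B. (c x b - of_int \<lfloor>c x b\<rfloor>) *\<^sub>R b)"
      by (subst (1) c[of x]) (simp add: algebra_simps sum_subtractf)
    also have "norm \<dots> \<le> (\<Sum>b\<in>B. norm ((c x b - of_int \<lfloor>c x b\<rfloor>) *\<^sub>R b))"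
      by (rule norm_sum)
    also have "\<dots> \<le> (\<Sum>b\<in>B. norm b)"
    proof (rule sum_mono)
      fix b
      have "\<bar>c x b - of_int \<lfloor>c x b\<rfloor>\<bar> \<le> 1" by linarith
      then show "norm ((c x b - of_int \<lfloor>c x b\<rfloor>) *\<^sub>R b) \<le> norm b"
        by (simp add: mult_left_le_one_le)
    qed
    finally show ?thesis .
  qed
  then show ?thesis by (rule that[of "\<lambda>x b. \<lfloor>c x b\<rfloor>"])
qed

text \<open>Dirichlet: two of the bounded residues \<open>k u - \<lambda>(k u)\<close>, with \<open>\<lambda>(k u) \<in> L\<close>, are close,
  and their difference is \<open>m u - v\<close> with \<open>m \<ge> 1\<close> and \<open>v \<in> L\<close>.\<close>
lemma lattice_vector_near_ray:
  fixes u :: "'a::euclidean_space"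
  assumes L: "is_lattice L" and u: "u \<noteq> 0" and e: "e > 0"
  obtains v m where "v \<in> L" "v \<noteq> 0" "m > 0" "norm (v - m *\<^sub>R u) < e"
proof -
  obtain B where B: "finite B" "B \<subseteq> L" "independent B" "span B = UNIV"
    by (rule lattice_independent_spanning_subset[OF L])
  obtain n where n: "\<And>x. norm (x - (\<Sum>b\<in>B. of_int (n x b) *\<^sub>R b)) \<le> (\<Sum>b\<in>B. norm b)"
    using int_combination_near[OF B(1,4)] by blast
  define lam where "lam x = (\<Sum>b\<in>B. of_int (n x b) *\<^sub>R b)" for x
  have lamL: "lam x \<in> L" for x
    unfolding lam_def by (rule additive_subgroup_int_combination[OF additive_subgroup_lattice[OF L] B(1,2)])
  define s where "s k = real k *\<^sub>R u - lam (real k *\<^sub>R u)" for k :: nat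
  have "norm (s k) \<le> (\<Sum>b\<in>B. norm b)" for k
    using n unfolding s_def lam_def .
  then have "bounded (range s)" unfolding bounded_iff by blast
  then obtain l r where r: "strict_mono r" "(s \<circ> r) \<longlonglongrightarrow> l"
    using bounded_imp_convergent_subsequence by blast
  define e' where "e' = min e (norm u)"
  have "e' > 0" using e u by (simp add: e'_def)
  then obtain N where N: "\<And>i j. i \<ge> N \<Longrightarrow> j \<ge> N \<Longrightarrow> dist ((s \<circ> r) j) ((s \<circ> r) i) < e'"
    using LIMSEQ_imp_Cauchy[OF r(2)] unfolding Cauchy_def by blast
  define v where "v = lam (real (r (Suc N)) *\<^sub>R u) - lam (real (r N) *\<^sub>R u)"
  define m where "m = real (r (Suc N)) - real (r N)"
  have vL: "v \<in> L" unfolding v_def by (rule additive_subgroup_diff[OF additive_subgroup_lattice[OF L] lamL lamL])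
  have "r N < r (Suc N)" using r(1) by (simp add: strict_mono_def)
  then have m: "m \<ge> 1" by (simp add: m_def)
  have vm: "norm (v - m *\<^sub>R u) < e'"
  proof -
    have "v - m *\<^sub>R u = s (r N) - s (r (Suc N))" by (simp add: s_def v_def m_def algebra_simps)
    then show ?thesis using N[of N "Suc N"] by (simp add: dist_norm norm_minus_commute)
  qed
  have "v \<noteq> 0"
  proof
    assume "v = 0"
    then have "norm (m *\<^sub>R u) < norm u" using vm e'_def by simp
    moreover have "norm u \<le> norm (m *\<^sub>R u)" using m by (simp add: mult_le_cancel_right1)
    ultimately show False by simp
  qed
  then show ?thesis using vL m vm by (intro that[of v m]) (auto simp: e'_def)
qed

text \<open>The residues of the multiples \<open>k x\<close> modulo the integer combinations of \<open>B\<close> lie in a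
  finite set \<open>F\<close>, so two of them coincide for some \<open>k \<le> card F\<close>; hence \<open>N = (card F)!\<close>.\<close>
lemma lattice_multiple_in_int_span:
  assumes L: "is_lattice L" and B: "finite B" "B \<subseteq> L" "span B = UNIV"
  obtains N :: nat where "N > 0"
    "\<And>x. x \<in> L \<Longrightarrow> \<exists>n. real N *\<^sub>R x = (\<Sum>b\<in>B. of_int (n b) *\<^sub>R b)"
proof -
  have G: "additive_subgroup L" using L by (rule additive_subgroup_lattice)
  obtain n where n: "\<And>x. norm (x - (\<Sum>b\<in>B. of_int (n x b) *\<^sub>R b)) \<le> (\<Sum>b\<in>B. norm b)"
    using int_combination_near[OF B(1,3)] by blast
  define lam where "lam x = (\<Sum>b\<in>B. of_int (n x b) *\<^sub>R b)" for x
  define F where "F = L \<inter> cball 0 (\<Sum>b\<in>B. norm b)"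
  have lamL: "lam x \<in> L" for x
    unfolding lam_def by (rule additive_subgroup_int_combination[OF G B(1,2)])
  have finF: "finite F" unfolding F_def by (rule finite_lattice_Int_bounded[OF L bounded_cball])
  have "\<exists>n. real (fact (card F)) *\<^sub>R x = (\<Sum>b\<in>B. of_int (n b) *\<^sub>R b)" if x: "x \<in> L" for x
  proof -
    define f where "f k = real k *\<^sub>R x - lam (real k *\<^sub>R x)" for k :: nat
    have "f ` {0..card F} \<subseteq> F"
      using n additive_subgroup_diff[OF G additive_subgroup_scaleR_nat[OF G x] lamL]
      by (auto simp: f_def F_def lam_def)
    then have "\<not> inj_on f {0..card F}"
      using card_inj_on_le[OF _ _ finF] by fastforce
    then obtain a b where ab: "b < a" "a \<le> card F" "f a = f b"
      unfolding inj_on_def by (metis atLeastAtMost_iff linorder_neqE_nat)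
    then have "real (a - b) *\<^sub>R x = lam (real a *\<^sub>R x) - lam (real b *\<^sub>R x)"
      by (simp add: f_def of_nat_diff scaleR_diff_left algebra_simps)
    also have "\<dots> = (\<Sum>c\<in>B. of_int (n (real a *\<^sub>R x) c - n (real b *\<^sub>R x) c) *\<^sub>R c)"
      by (simp add: lam_def sum_subtractf scaleR_diff_left)
    finally have eq: "real (a - b) *\<^sub>R x = \<dots>" .
    have "(a - b) dvd fact (card F)" using ab by (intro dvd_fact) auto
    then obtain q where q: "fact (card F) = (a - b) * q" by (elim dvdE)
    have "real (fact (card F)) *\<^sub>R x = real q *\<^sub>R (real (a - b) *\<^sub>R x)"
      by (simp add: q)
    also have "\<dots> = (\<Sum>c\<in>B. of_int (int q * (n (real a *\<^sub>R x) c - n (real b *\<^sub>R x) c)) *\<^sub>R c)"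
      by (subst eq) (simp add: scaleR_sum_right)
    finally show ?thesis
      by (intro exI[of _ "\<lambda>c. int q * (n (real a *\<^sub>R x) c - n (real b *\<^sub>R x) c)"])
  qed
  then show ?thesis using that[of "fact (card F)"] by simp
qed

lemma dual_basis_exists:
  fixes B :: "'a::euclidean_space set"
  assumes B: "independent B" "span B = UNIV"
  obtains y where "\<And>b b'. b \<in> B \<Longrightarrow> b' \<in> B \<Longrightarrow> b' \<bullet> y b = (if b' = b then 1 else 0)"
proof -
  have "\<exists>z. \<forall>b'\<in>B. b' \<bullet> z = (if b' = b then 1 else 0)" if b: "b \<in> B" for b
  proof -
    have "b \<notin> span (B - {b})" using B(1) b by (meson dependent_def)
    then obtain z where z: "z \<noteq> 0" "\<And>x. x \<in> span (B - {b}) \<Longrightarrow> z \<bullet> x = 0"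
      using span_not_UNIV_orthogonal by blast
    have zb: "z \<bullet> b \<noteq> 0"
    proof
      assume "z \<bullet> b = 0"
      then have "orthogonal x z" if "x \<in> B" for x
        using z(2)[of x] that span_base[of x "B - {b}"]
        by (cases "x = b") (auto simp: orthogonal_def inner_commute)
      then have "orthogonal z z" using orthogonal_to_span[of z B z] B(2) by (auto simp: orthogonal_commute)
      then show False using z(1) by (simp add: orthogonal_def)
    qed
    have "b' \<bullet> ((1 / (z \<bullet> b)) *\<^sub>R z) = (if b' = b then 1 else 0)" if "b' \<in> B" for b'
      using zb z(2)[of b'] that span_base[of b' "B - {b}"] by (auto simp: inner_commute)
    then show ?thesis by blast
  qed
  then obtain y where "\<And>b. b \<in> B \<Longrightarrow> \<forall>b'\<in>B. b' \<bullet> y b = (if b' = b then 1 else 0)" by metis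
  then show ?thesis using that by blast
qed

lemma inner_dual_basis:
  assumes "finite B" "b \<in> B" "\<And>b'. b' \<in> B \<Longrightarrow> b' \<bullet> y = (if b' = b then 1 else 0)"
  shows "(\<Sum>b'\<in>B. f b' *\<^sub>R b') \<bullet> y = f b"
proof -
  have "(\<Sum>b'\<in>B. f b' *\<^sub>R b') \<bullet> y = (\<Sum>b'\<in>B. if b' = b then f b' else 0)"
    unfolding inner_sum_left by (rule sum.cong) (auto simp: assms(3))
  then show ?thesis using assms(1,2) by simp
qed

text \<open>If \<open>N L\<close> lies in the integer span of a basis \<open>B \<subseteq> L\<close>, the dual basis scaled by \<open>N\<close> lies
  in the dual lattice.\<close>
lemma span_dual_lattice:
  assumes L: "is_lattice L"
  shows "span (dual_lattice L) = UNIV"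
proof -
  obtain B where B: "finite B" "B \<subseteq> L" "independent B" "span B = UNIV"
    by (rule lattice_independent_spanning_subset[OF L])
  obtain y where y: "\<And>b b'. b \<in> B \<Longrightarrow> b' \<in> B \<Longrightarrow> b' \<bullet> y b = (if b' = b then 1 else 0)"
    using dual_basis_exists[OF B(3,4)] by blast
  obtain N :: nat where N: "N > 0" "\<And>x. x \<in> L \<Longrightarrow> \<exists>n. real N *\<^sub>R x = (\<Sum>b\<in>B. of_int (n b) *\<^sub>R b)"
    using lattice_multiple_in_int_span[OF L B(1,2,4)] by blast
  have dual: "real N *\<^sub>R y b \<in> dual_lattice L" if b: "b \<in> B" for b
  proof -
    have "x \<bullet> (real N *\<^sub>R y b) \<in> \<int>" if "x \<in> L" for x
    proof -
      obtain n where n: "real N *\<^sub>R x = (\<Sum>b\<in>B. of_int (n b) *\<^sub>R b)" using N(2)[OF \<open>x \<in> L\<close>] by blast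
      have "x \<bullet> (real N *\<^sub>R y b) = (real N *\<^sub>R x) \<bullet> y b" by simp
      also have "\<dots> = of_int (n b)" unfolding n by (rule inner_dual_basis[OF B(1) b]) (simp add: y b)
      finally show ?thesis by simp
    qed
    then show ?thesis by (simp add: dual_lattice_def)
  qed
  show ?thesis
  proof (rule ccontr)
    assume "span (dual_lattice L) \<noteq> UNIV"
    then obtain z where z: "z \<noteq> 0" "\<And>x. x \<in> span (dual_lattice L) \<Longrightarrow> z \<bullet> x = 0"
      using span_not_UNIV_orthogonal by blast
    obtain c where c: "z = (\<Sum>b\<in>B. c b *\<^sub>R b)" using B(1,4) span_finite[of B] by auto
    have "c b = 0" if b: "b \<in> B" for b
    proof -
      have "c b = z \<bullet> y b" unfolding c by (rule inner_dual_basis[OF B(1) b, symmetric]) (simp add: y b)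
      also have "\<dots> = 0" using z(2)[OF span_base[OF dual[OF b]]] N(1) by simp
      finally show ?thesis .
    qed
    then show False using z(1) by (simp add: c)
  qed
qed

lemma dual_lattice_norm_lower_bound:
  assumes L: "is_lattice L"
  obtains d where "d > 0" "\<And>y. y \<in> dual_lattice L \<Longrightarrow> y \<noteq> 0 \<Longrightarrow> d \<le> norm y"
proof -
  obtain B where B: "finite B" "B \<subseteq> L" "independent B" "span B = UNIV"
    by (rule lattice_independent_spanning_subset[OF L])
  define S where "S = (\<Sum>b\<in>B. norm b)"
  have S0: "S \<ge> 0" by (simp add: S_def sum_nonneg)
  have "1 / (S + 1) \<le> norm y" if y: "y \<in> dual_lattice L" "y \<noteq> 0" for y
  proof -
    have "\<exists>b\<in>B. b \<bullet> y \<noteq> 0"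
    proof (rule ccontr)
      assume "\<not> (\<exists>b\<in>B. b \<bullet> y \<noteq> 0)"
      then have "orthogonal y y"
        using orthogonal_to_span[of y B y] B(4) by (auto simp: orthogonal_def inner_commute)
      then show False using y(2) by (simp add: orthogonal_def)
    qed
    then obtain b where b: "b \<in> B" "b \<bullet> y \<noteq> 0" by blast
    have "b \<bullet> y \<in> \<int>" using y(1) b(1) B(2) by (auto simp: dual_lattice_def)
    then have "1 \<le> \<bar>b \<bullet> y\<bar>" using b(2) by (rule Ints_nonzero_abs_ge1)
    also have "\<dots> \<le> norm b * norm y" by (rule Cauchy_Schwarz_ineq2)
    also have "\<dots> \<le> S * norm y" unfolding S_def
      by (rule mult_right_mono[OF member_le_sum[OF b(1)]]) (auto simp: B(1))
    also have "\<dots> \<le> (S + 1) * norm y" by (simp add: mult_right_mono)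
    finally show ?thesis using S0 by (simp add: field_simps)
  qed
  moreover have "1 / (S + 1) > 0" using S0 by simp
  ultimately show ?thesis using that by blast
qed

lemma is_lattice_dual_lattice:
  assumes L: "is_lattice L"
  shows "is_lattice (dual_lattice L)"
proof -
  obtain d where d: "d > 0" "\<And>y. y \<in> dual_lattice L \<Longrightarrow> y \<noteq> 0 \<Longrightarrow> d \<le> norm y"
    using dual_lattice_norm_lower_bound[OF L] by blast
  have "y - x \<in> dual_lattice L" if "x \<in> dual_lattice L" "y \<in> dual_lattice L" for x y
    using that by (auto simp: dual_lattice_def inner_diff_right)
  then have "d \<le> dist y x" if "x \<in> dual_lattice L" "y \<in> dual_lattice L" "y \<noteq> x" for x y
    using that d(2)[of "y - x"] by (simp add: dist_norm)
  then show ?thesis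
    using d(1) span_dual_lattice[OF L]
    by (auto simp: is_lattice_def dual_lattice_def inner_add_right)
qed

lemma finite_lattice_multiples:
  assumes L: "is_lattice L" and v: "v \<noteq> 0"
  shows "finite {s. 0 < s \<and> s \<le> 1 \<and> s *\<^sub>R v \<in> L}"
proof -
  have "(\<lambda>s. s *\<^sub>R v) ` {s. 0 < s \<and> s \<le> 1 \<and> s *\<^sub>R v \<in> L} \<subseteq> L \<inter> cball 0 (norm v)"
    by (auto simp: mult_left_le_one_le)
  then have "finite ((\<lambda>s. s *\<^sub>R v) ` {s. 0 < s \<and> s \<le> 1 \<and> s *\<^sub>R v \<in> L})"
    using finite_subset finite_lattice_Int_bounded[OF L bounded_cball] by blast
  moreover have "inj_on (\<lambda>s. s *\<^sub>R v) {s. 0 < s \<and> s \<le> 1 \<and> s *\<^sub>R v \<in> L}"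
    using v by (auto simp: inj_on_def)
  ultimately show ?thesis by (rule finite_imageD)
qed

text \<open>The primitive vector is \<open>s\<^sub>0 v\<close> for the least \<open>s\<^sub>0 \<in> (0, 1]\<close> with \<open>s\<^sub>0 v \<in> L\<close>.\<close>
lemma lattice_primitive_multiple:
  assumes L: "is_lattice L" and v: "v \<in> L" "v \<noteq> 0"
  obtains p and k :: int where "lattice_primitive L p" "k \<ge> 1" "v = of_int k *\<^sub>R p"
proof -
  have G: "additive_subgroup L" using L by (rule additive_subgroup_lattice)
  define S where "S = {s::real. 0 < s \<and> s \<le> 1 \<and> s *\<^sub>R v \<in> L}"
  have finS: "finite S" unfolding S_def using finite_lattice_multiples[OF L v(2)] .
  have "1 \<in> S" using v(1) by (simp add: S_def)
  define s0 where "s0 = Min S"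
  have s0S: "s0 \<in> S" unfolding s0_def using finS \<open>1 \<in> S\<close> by (intro Min_in) auto
  have s0_le: "s0 \<le> s" if "s \<in> S" for s unfolding s0_def using finS that by simp
  have s0: "0 < s0" using s0S by (simp add: S_def)
  define p where "p = s0 *\<^sub>R v"
  have pL: "p \<in> L" using s0S by (simp add: S_def p_def)
  have int_multiple: "\<exists>k::int. x = of_int k *\<^sub>R p" if x: "x \<in> L" "x \<in> span {p}" for x
  proof -
    obtain t where t: "x = t *\<^sub>R p" using x(2) by (auto simp: span_singleton)
    define f where "f = t - of_int \<lfloor>t\<rfloor>"
    have f: "0 \<le> f" "f < 1" unfolding f_def by linarith+
    have "x - of_int \<lfloor>t\<rfloor> *\<^sub>R p \<in> L"
      using additive_subgroup_diff[OF G x(1) additive_subgroup_scaleR_int[OF G pL]] .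
    then have "(f * s0) *\<^sub>R v \<in> L" by (simp add: t f_def p_def left_diff_distrib scaleR_diff_left)
    have "f = 0"
    proof (rule ccontr)
      assume "f \<noteq> 0"
      then have "f * s0 \<in> S"
        using \<open>(f * s0) *\<^sub>R v \<in> L\<close> f s0 s0S by (auto simp: S_def mult_le_one)
      then show False using s0_le[of "f * s0"] f s0 by simp
    qed
    then show ?thesis by (auto simp: t f_def)
  qed
  have "L \<inter> span {p} = range (\<lambda>k::int. of_int k *\<^sub>R p)"
  proof (intro equalityI subsetI)
    fix x assume "x \<in> L \<inter> span {p}"
    then show "x \<in> range (\<lambda>k::int. of_int k *\<^sub>R p)" using int_multiple by blast
  qed (use additive_subgroup_scaleR_int[OF G pL] in \<open>auto simp: span_singleton\<close>)
  moreover have "p \<noteq> 0" using s0 v(2) by (simp add: p_def)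
  ultimately have prim: "lattice_primitive L p" using pL by (simp add: lattice_primitive_def)
  have "v = (1 / s0) *\<^sub>R p" using s0 by (simp add: p_def)
  then obtain k :: int where k: "v = of_int k *\<^sub>R p"
    using int_multiple[OF v(1)] by (auto simp: span_singleton)
  then have "(of_int k * s0) *\<^sub>R v = 1 *\<^sub>R v" by (simp add: p_def)
  then have "of_int k * s0 = 1" using v(2) by (metis scaleR_cancel_right)
  then have "k \<ge> 1" using s0 by (smt (verit) mult_nonpos_nonneg of_int_le_0_iff of_int_less_1_iff)
  then show ?thesis using that prim k by blast
qed

section \<open>Lattice diameter and lattice complete bodies\<close>

definition lattice_lengths :: "'a::euclidean_space set \<Rightarrow> 'a set \<Rightarrow> real set" where
  "lattice_lengths L K =
     {s. 0 < s \<and> (\<exists>a\<in>K. \<exists>b\<in>K. \<exists>v. lattice_primitive L v \<and> b - a = s *\<^sub>R v)}"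

lemma lattice_diam_eq_Sup_lattice_lengths: "lattice_diam L K = Sup (lattice_lengths L K)"
proof -
  have "{norm (b - a) / norm v | a b v. a \<in> K \<and> b \<in> K \<and> lattice_primitive L v
            \<and> (\<exists>t>0. v = t *\<^sub>R (b - a))} = lattice_lengths L K" (is "?A = _")
  proof (intro equalityI subsetI)
    fix s assume "s \<in> ?A"
    then obtain a b v t where abv: "a \<in> K" "b \<in> K" "lattice_primitive L v" "t > 0"
      "v = t *\<^sub>R (b - a)" "s = norm (b - a) / norm v" by blast
    then have "b - a \<noteq> 0" by (auto simp: lattice_primitive_def)
    then have "s = 1 / t" "b - a = (1 / t) *\<^sub>R v" using abv(4-6) by auto
    then show "s \<in> lattice_lengths L K" using abv(1-4) by (auto simp: lattice_lengths_def)
  next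
    fix s assume "s \<in> lattice_lengths L K"
    then obtain a b v where abv: "s > 0" "a \<in> K" "b \<in> K" "lattice_primitive L v" "b - a = s *\<^sub>R v"
      by (auto simp: lattice_lengths_def)
    then have "v \<noteq> 0" by (simp add: lattice_primitive_def)
    then have "v = (1 / s) *\<^sub>R (b - a)" "s = norm (b - a) / norm v" using abv(1,5) by auto
    moreover have "1 / s > 0" using abv(1) by simp
    ultimately show "s \<in> ?A" using abv(2-4) by blast
  qed
  then show ?thesis by (simp add: lattice_diam_def)
qed

lemma bdd_above_lattice_lengths:
  assumes L: "is_lattice L" and K: "bounded K"
  shows "bdd_above (lattice_lengths L K)"
proof -
  obtain e where e: "e > 0" "\<And>y. y \<in> L \<Longrightarrow> y \<noteq> 0 \<Longrightarrow> e \<le> norm y"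
    using lattice_norm_lower_bound[OF L] by blast
  obtain R where R: "\<And>x. x \<in> K \<Longrightarrow> norm x \<le> R" using K bounded_iff by blast
  have "s \<le> 2 * R / e" if s: "s \<in> lattice_lengths L K" for s
  proof -
    obtain a b v where abv: "s > 0" "a \<in> K" "b \<in> K" "lattice_primitive L v" "b - a = s *\<^sub>R v"
      using s by (auto simp: lattice_lengths_def)
    have "s * e \<le> s * norm v" using e(2)[of v] abv(1,4) by (simp add: lattice_primitive_def)
    also have "\<dots> = norm (b - a)" using abv(1,5) by simp
    also have "\<dots> \<le> 2 * R" using R[OF abv(2)] R[OF abv(3)] norm_triangle_ineq4[of b a] by simp
    finally show ?thesis using e(1) by (simp add: field_simps)
  qed
  then show ?thesis by (auto simp: bdd_above_def)
qed

lemma lattice_lengths_nonempty: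
  assumes L: "is_lattice L" and K: "interior K \<noteq> {}"
  shows "lattice_lengths L K \<noteq> {}"
proof -
  obtain c r where cr: "r > 0" "cball c r \<subseteq> K"
    using K open_interior open_contains_cball interior_subset by (metis all_not_in_conv subset_trans)
  obtain v where "v \<in> L" "v \<noteq> 0"
    using span_UNIV_nonzero L by (auto simp: is_lattice_def)
  then obtain p where p: "lattice_primitive L p" using lattice_primitive_multiple[OF L] by blast
  then have "p \<noteq> 0" by (simp add: lattice_primitive_def)
  define s where "s = r / norm p"
  have "c \<in> K" "c + s *\<^sub>R p \<in> K" using cr \<open>p \<noteq> 0\<close> by (auto simp: s_def dist_norm)
  moreover have "s > 0" using cr(1) \<open>p \<noteq> 0\<close> by (simp add: s_def)
  ultimately have "s \<in> lattice_lengths L K" using p unfolding lattice_lengths_def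
    by (intro CollectI conjI bexI[of _ c] bexI[of _ "c + s *\<^sub>R p"] exI[of _ p]) auto
  then show ?thesis by blast
qed

lemma lattice_length_le_diam:
  assumes "is_lattice L" "bounded K" "s \<in> lattice_lengths L K"
  shows "s \<le> lattice_diam L K"
  unfolding lattice_diam_eq_Sup_lattice_lengths
  using assms by (intro cSup_upper bdd_above_lattice_lengths)

lemma lattice_segment_le_diam:
  assumes L: "is_lattice L" and K: "bounded K" "a \<in> K" "b \<in> K"
    and v: "v \<in> L" "v \<noteq> 0" and s: "s > 0" "b - a = s *\<^sub>R v"
  shows "s \<le> lattice_diam L K"
proof -
  obtain p and k :: int where p: "lattice_primitive L p" "k \<ge> 1" "v = of_int k *\<^sub>R p"
    using lattice_primitive_multiple[OF L v] by blast
  have "s * of_int k \<in> lattice_lengths L K"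
    using K(2,3) p s by (auto simp: lattice_lengths_def)
  then have "s * of_int k \<le> lattice_diam L K" by (rule lattice_length_le_diam[OF L K(1)])
  moreover have "s \<le> s * of_int k" using s(1) p(2) by simp
  ultimately show ?thesis by linarith
qed

lemma lattice_diam_nonneg:
  assumes "is_lattice L" "bounded K" "interior K \<noteq> {}"
  shows "0 \<le> lattice_diam L K"
proof -
  obtain s where "s \<in> lattice_lengths L K" using lattice_lengths_nonempty assms by blast
  then show ?thesis using lattice_length_le_diam[OF assms(1,2)] by (fastforce simp: lattice_lengths_def)
qed

lemma lattice_lengths_mono: "K \<subseteq> K' \<Longrightarrow> lattice_lengths L K \<subseteq> lattice_lengths L K'"
  unfolding lattice_lengths_def by blast

lemma lattice_diam_mono:
  assumes "is_lattice L" "K \<subseteq> K'" "interior K \<noteq> {}" "bounded K'"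
  shows "lattice_diam L K \<le> lattice_diam L K'"
  unfolding lattice_diam_eq_Sup_lattice_lengths using assms
  by (intro cSup_subset_mono lattice_lengths_nonempty bdd_above_lattice_lengths lattice_lengths_mono)

lemma lattice_diam_closure:
  assumes L: "is_lattice L" and U: "convex U" "bounded U" "interior U \<noteq> {}"
  shows "lattice_diam L (closure U) = lattice_diam L U"
proof (rule antisym)
  show "lattice_diam L U \<le> lattice_diam L (closure U)"
    using L closure_subset U(3) bounded_closure[OF U(2)] by (rule lattice_diam_mono)
  obtain c where c: "c \<in> interior U" using U(3) by blast
  have int: "interior (closure U) \<noteq> {}" using U(3) interior_mono[OF closure_subset] by blast
  show "lattice_diam L (closure U) \<le> lattice_diam L U"
    unfolding lattice_diam_eq_Sup_lattice_lengths[of L "closure U"]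
  proof (rule cSup_least[OF lattice_lengths_nonempty[OF L int]])
    fix s assume "s \<in> lattice_lengths L (closure U)"
    then obtain a b v where abv: "s > 0" "a \<in> closure U" "b \<in> closure U" "lattice_primitive L v"
      "b - a = s *\<^sub>R v"
      by (auto simp: lattice_lengths_def)
    have "t \<le> lattice_diam L U" if t: "t < s" for t
    proof (cases "t \<le> 0")
      case True
      then show ?thesis using lattice_diam_nonneg[OF L U(2,3)] by linarith
    next
      case False
      define e where "e = 1 - t / s"
      have e: "0 < e" "e \<le> 1" using False t abv(1) by (auto simp: e_def field_simps)
      txt \<open>Shrinking the segment towards the interior point \<open>c\<close> moves it into \<open>U\<close>.\<close>
      have "a - e *\<^sub>R (a - c) \<in> U" "b - e *\<^sub>R (b - c) \<in> U"
        using mem_interior_closure_convex_shrink[OF U(1) c] abv(2,3) e interior_subset by blast+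
      moreover have "(b - e *\<^sub>R (b - c)) - (a - e *\<^sub>R (a - c)) = t *\<^sub>R v"
      proof -
        have "(b - e *\<^sub>R (b - c)) - (a - e *\<^sub>R (a - c)) = (1 - e) *\<^sub>R (b - a)"
          by (simp add: algebra_simps)
        also have "\<dots> = t *\<^sub>R v" using abv(1,5) by (simp add: e_def)
        finally show ?thesis .
      qed
      ultimately have "t \<in> lattice_lengths L U"
        using False abv(4) unfolding lattice_lengths_def by force
      then show ?thesis by (rule lattice_length_le_diam[OF L U(2)])
    qed
    then show "s \<le> lattice_diam L U" by (rule dense_le)
  qed
qed

lemma lattice_diam_Union_chain_le:
  assumes L: "is_lattice L" and chain: "\<And>X Y. X \<in> \<C> \<Longrightarrow> Y \<in> \<C> \<Longrightarrow> X \<subseteq> Y \<or> Y \<subseteq> X"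
    and diam: "\<And>K. K \<in> \<C> \<Longrightarrow> bounded K \<and> lattice_diam L K \<le> D"
    and int: "interior (\<Union>\<C>) \<noteq> {}"
  shows "lattice_diam L (\<Union>\<C>) \<le> D"
  unfolding lattice_diam_eq_Sup_lattice_lengths[of L "\<Union>\<C>"]
proof (rule cSup_least[OF lattice_lengths_nonempty[OF L int]])
  fix s assume "s \<in> lattice_lengths L (\<Union>\<C>)"
  then obtain a b v where abv: "s > 0" "a \<in> \<Union>\<C>" "b \<in> \<Union>\<C>" "lattice_primitive L v" "b - a = s *\<^sub>R v"
    by (auto simp: lattice_lengths_def)
  then obtain X where X: "X \<in> \<C>" "a \<in> X" "b \<in> X" using chain by blast
  then have "s \<in> lattice_lengths L X" using abv by (auto simp: lattice_lengths_def)
  then show "s \<le> D" using lattice_length_le_diam[OF L] diam[OF X(1)] by fastforce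
qed

lemma convex_Union_chain:
  assumes "\<And>X Y. X \<in> \<C> \<Longrightarrow> Y \<in> \<C> \<Longrightarrow> X \<subseteq> Y \<or> Y \<subseteq> X" "\<And>X. X \<in> \<C> \<Longrightarrow> convex X"
  shows "convex (\<Union>\<C>)"
proof (rule convexI)
  fix x y and u v :: real
  assume "x \<in> \<Union>\<C>" "y \<in> \<Union>\<C>" "0 \<le> u" "0 \<le> v" "u + v = 1"
  moreover obtain X where "X \<in> \<C>" "x \<in> X" "y \<in> X" using assms(1) \<open>x \<in> \<Union>\<C>\<close> \<open>y \<in> \<Union>\<C>\<close> by blast
  ultimately show "u *\<^sub>R x + v *\<^sub>R y \<in> \<Union>\<C>" using assms(2) convexD by blast
qed

text \<open>The point \<open>b\<close> lies on the segment from a point \<open>c\<^sub>2\<close> near \<open>c\<close> to the far point \<open>x\<close>, and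
  the offsets of \<open>a\<close> and \<open>c\<^sub>2\<close> from \<open>c\<close> absorb the angle between \<open>v\<close> and \<open>x - c\<close>.\<close>
lemma convex_contains_segment_towards_far_point:
  fixes K :: "'a::real_normed_vector set"
  assumes K: "convex K" "cball c r \<subseteq> K" and x: "x \<in> K"
    and T: "T > 0" and m: "m > 0" and far: "2 * m * T \<le> norm (x - c)"
    and close: "T * norm (v - (m / norm (x - c)) *\<^sub>R (x - c)) \<le> r"
  obtains a b where "a \<in> K" "b \<in> K" "b - a = T *\<^sub>R v"
proof -
  define X where "X = norm (x - c)"
  define w where "w = v - (m / X) *\<^sub>R (x - c)"
  define t where "t = T * m / X"
  have "0 < 2 * m * T" using T m by simp
  then have X: "X > 0" using far unfolding X_def by linarith
  have t: "0 < t" "t \<le> 1 / 2" using T m X far by (auto simp: t_def X_def field_simps)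
  have Tw: "T * norm w \<le> r" using close by (simp add: w_def X_def)
  define a where "a = c - (T / 2) *\<^sub>R w"
  define c2 where "c2 = c + (T / (2 * (1 - t))) *\<^sub>R w"
  define b where "b = (1 - t) *\<^sub>R c2 + t *\<^sub>R x"
  have "norm (a - c) = T / 2 * norm w" using T by (simp add: a_def)
  also have "\<dots> \<le> T * norm w" using T by (intro mult_right_mono) auto
  also have "\<dots> \<le> r" by (rule Tw)
  finally have aK: "a \<in> K" using K(2) by (auto simp: dist_norm norm_minus_commute)
  have "norm (c2 - c) = T / (2 * (1 - t)) * norm w" using T t by (simp add: c2_def)
  also have "\<dots> \<le> T * norm w"
    using t T by (intro mult_right_mono) (simp_all add: field_simps)
  finally have "c2 \<in> K" using Tw K(2) by (auto simp: dist_norm norm_minus_commute)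
  then have bK: "b \<in> K" unfolding b_def using t by (intro convexD[OF K(1) _ x]) auto
  have coeff: "(1 - t) * (T / (2 * (1 - t))) + T / 2 = T" using t by (simp add: field_simps)
  have "b - a = ((1 - t) * (T / (2 * (1 - t))) + T / 2) *\<^sub>R w + t *\<^sub>R (x - c)"
    by (simp add: a_def b_def c2_def algebra_simps)
  also have "\<dots> = T *\<^sub>R w + (T * (m / X)) *\<^sub>R (x - c)" by (simp only: coeff) (simp add: t_def)
  also have "\<dots> = T *\<^sub>R v" by (simp add: w_def algebra_simps)
  finally show ?thesis using that aK bK by blast
qed

lemma unbounded_asymptotic_direction:
  fixes S :: "'a::euclidean_space set" and c :: 'a
  assumes "\<not> bounded S"
  obtains u where "u \<noteq> 0"
    "\<And>e R. e > 0 \<Longrightarrow> \<exists>x\<in>S. R \<le> norm (x - c) \<and> norm (sgn (x - c) - u) < e"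
proof -
  have "\<forall>n::nat. \<exists>y\<in>S. real n < norm (y - c)"
    using assms unfolding bounded_any_center[of _ c] by (metis dist_norm norm_minus_commute not_le)
  then obtain x where x: "\<And>n. x n \<in> S" "\<And>n. real n < norm (x n - c)" by metis
  have "sgn (x n - c) \<in> sphere 0 1" for n
    using x(2)[of n] of_nat_0_le_iff[of n] by (auto simp: norm_sgn)
  then obtain u \<rho> where u: "u \<in> sphere 0 1" "strict_mono \<rho>" "((\<lambda>n. sgn (x n - c)) \<circ> \<rho>) \<longlonglongrightarrow> u"
    using compact_sphere[THEN compact_imp_seq_compact] by (metis seq_compactE)
  have "\<exists>x\<in>S. R \<le> norm (x - c) \<and> norm (sgn (x - c) - u) < e" if "e > 0" for e R
  proof -
    have "eventually (\<lambda>n. norm (sgn (x (\<rho> n) - c) - u) < e) sequentially"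
      using u(3) \<open>e > 0\<close> unfolding tendsto_iff by (auto simp: dist_norm)
    moreover have "eventually (\<lambda>n. R \<le> norm (x (\<rho> n) - c)) sequentially"
    proof (rule eventually_mono[OF eventually_ge_at_top[of "nat \<lceil>R\<rceil>"]])
      fix n assume "nat \<lceil>R\<rceil> \<le> n"
      then have "R \<le> real (\<rho> n)" using seq_suble[OF u(2), of n] by linarith
      then show "R \<le> norm (x (\<rho> n) - c)" using x(2)[of "\<rho> n"] by linarith
    qed
    ultimately obtain n where "norm (sgn (x (\<rho> n) - c) - u) < e" "R \<le> norm (x (\<rho> n) - c)"
      by (metis (mono_tags, lifting) eventually_conj eventually_sequentially order.refl)
    then show ?thesis using x(1) by blast
  qed
  moreover have "u \<noteq> 0" using u(1) by auto
  ultimately show ?thesis using that by blast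
qed

text \<open>An unbounded union escapes along some direction \<open>u\<close>; a lattice vector \<open>v\<close> almost
  parallel to \<open>u\<close> then yields lattice segments \<open>T v\<close> of length \<open>T > D\<close> inside one member.\<close>
lemma bounded_Union_if_lattice_diam_le:
  assumes L: "is_lattice L" and r: "r > 0"
    and \<K>: "\<And>K. K \<in> \<K> \<Longrightarrow> convex K \<and> cball c r \<subseteq> K \<and> bounded K \<and> lattice_diam L K \<le> D"
  shows "bounded (\<Union>\<K>)"
proof (rule ccontr)
  assume "\<not> bounded (\<Union>\<K>)"
  then obtain u where u: "u \<noteq> 0"
    "\<And>e R. e > 0 \<Longrightarrow> \<exists>x\<in>\<Union>\<K>. R \<le> norm (x - c) \<and> norm (sgn (x - c) - u) < e"
    using unbounded_asymptotic_direction[of "\<Union>\<K>" c] by blast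
  define T where "T = \<bar>D\<bar> + 1"
  have T: "T > 0" "D < T" by (auto simp: T_def)
  obtain v m where v: "v \<in> L" "v \<noteq> 0" "m > 0" "norm (v - m *\<^sub>R u) < r / (2 * T)"
    using lattice_vector_near_ray[OF L u(1), of "r / (2 * T)"] r T by auto
  obtain x where x: "x \<in> \<Union>\<K>" "2 * m * T \<le> norm (x - c)" "norm (sgn (x - c) - u) < r / (2 * T * m)"
    using u(2)[of "r / (2 * T * m)" "2 * m * T"] r T v(3) by auto
  obtain K where K: "K \<in> \<K>" "x \<in> K" using x(1) by blast
  have "norm (v - (m / norm (x - c)) *\<^sub>R (x - c)) = norm ((v - m *\<^sub>R u) + m *\<^sub>R (u - sgn (x - c)))"
    by (simp add: sgn_div_norm divide_inverse algebra_simps)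
  also have "\<dots> \<le> norm (v - m *\<^sub>R u) + m * norm (u - sgn (x - c))"
    using norm_triangle_ineq[of "v - m *\<^sub>R u" "m *\<^sub>R (u - sgn (x - c))"] v(3) by simp
  also have "\<dots> < r / T"
    using v(3,4) x(3) T by (simp add: norm_minus_commute field_simps)
  finally have "T * norm (v - (m / norm (x - c)) *\<^sub>R (x - c)) \<le> r"
    using T by (simp add: field_simps)
  then obtain a b where "a \<in> K" "b \<in> K" "b - a = T *\<^sub>R v"
    using convex_contains_segment_towards_far_point[OF _ _ K(2) T(1) v(3) x(2)] \<K>[OF K(1)] by blast
  then have "T \<le> lattice_diam L K"
    using lattice_segment_le_diam[OF L _ _ _ v(1,2) T(1)] \<K>[OF K(1)] by blast
  then show False using \<K>[OF K(1)] T(2) by linarith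
qed

lemma convex_body_closure_Union_chain:
  assumes L: "is_lattice L" and "C \<in> \<C>"
    and chain: "\<And>X Y. X \<in> \<C> \<Longrightarrow> Y \<in> \<C> \<Longrightarrow> X \<subseteq> Y \<or> Y \<subseteq> X"
    and \<C>: "\<And>X. X \<in> \<C> \<Longrightarrow> convex_body X \<and> C \<subseteq> X \<and> lattice_diam L X = D"
  shows "convex_body (closure (\<Union>\<C>)) \<and> lattice_diam L (closure (\<Union>\<C>)) = D"
proof -
  have C: "convex_body C" "lattice_diam L C = D" "C \<subseteq> \<Union>\<C>" using \<C>[OF \<open>C \<in> \<C>\<close>] \<open>C \<in> \<C>\<close> by auto
  obtain c r where cr: "r > 0" "cball c r \<subseteq> C"
    using C(1) unfolding convex_body_def
    by (metis all_not_in_conv interior_subset open_contains_cball open_interior subset_trans)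
  have bdd: "bounded (\<Union>\<C>)"
  proof (rule bounded_Union_if_lattice_diam_le[OF L cr(1)])
    fix K assume "K \<in> \<C>"
    then show "convex K \<and> cball c r \<subseteq> K \<and> bounded K \<and> lattice_diam L K \<le> D"
      using \<C>[of K] cr(2) by (auto simp: convex_body_def compact_imp_bounded)
  qed
  have cvx: "convex (\<Union>\<C>)"
  proof (rule convex_Union_chain[OF chain])
    show "convex X" if "X \<in> \<C>" for X using \<C>[OF that] by (simp add: convex_body_def)
  qed
  have int: "interior (\<Union>\<C>) \<noteq> {}"
    using C(1) interior_mono[OF C(3)] by (auto simp: convex_body_def)
  have "lattice_diam L (\<Union>\<C>) = D"
  proof (rule antisym)
    show "lattice_diam L (\<Union>\<C>) \<le> D"
    proof (rule lattice_diam_Union_chain_le[OF L chain _ int])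
      show "bounded K \<and> lattice_diam L K \<le> D" if "K \<in> \<C>" for K
        using \<C>[OF that] by (auto simp: convex_body_def compact_imp_bounded)
    qed
    have "lattice_diam L C \<le> lattice_diam L (\<Union>\<C>)"
      using C(1) by (intro lattice_diam_mono[OF L C(3) _ bdd]) (simp add: convex_body_def)
    then show "D \<le> lattice_diam L (\<Union>\<C>)" using C(2) by simp
  qed
  moreover have "interior (closure (\<Union>\<C>)) \<noteq> {}"
    using int interior_mono[OF closure_subset, of "\<Union>\<C>"] by blast
  ultimately show ?thesis
    using bdd cvx by (simp add: convex_body_def lattice_diam_closure[OF L cvx bdd int] compact_closure convex_closure)
qed

lemma lattice_completion_exists:
  assumes L: "is_lattice L" and C: "convex_body C"
  obtains K where "convex_body K" "C \<subseteq> K" "lattice_complete L K"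
    "lattice_diam L K = lattice_diam L C"
proof -
  define \<A> where "\<A> = {K. convex_body K \<and> C \<subseteq> K \<and> lattice_diam L K = lattice_diam L C}"
  have "\<exists>U\<in>\<A>. \<forall>X\<in>\<C>. X \<subseteq> U" if ch: "subset.chain \<A> \<C>" for \<C>
  proof -
    define U where "U = closure (\<Union>(insert C \<C>))"
    have "convex_body U \<and> lattice_diam L U = lattice_diam L C"
      unfolding U_def
    proof (rule convex_body_closure_Union_chain[OF L insertI1])
      show "X \<subseteq> Y \<or> Y \<subseteq> X" if "X \<in> insert C \<C>" "Y \<in> insert C \<C>" for X Y
        using that ch unfolding subset_chain_def \<A>_def by blast
      show "convex_body X \<and> C \<subseteq> X \<and> lattice_diam L X = lattice_diam L C" if "X \<in> insert C \<C>" for X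
        using that ch C by (auto simp: subset_chain_def \<A>_def)
    qed
    moreover have "\<Union>(insert C \<C>) \<subseteq> U" unfolding U_def by (rule closure_subset)
    ultimately have "U \<in> \<A>" and "\<forall>X\<in>\<C>. X \<subseteq> U" by (auto simp: \<A>_def)
    then show ?thesis by blast
  qed
  then have "\<exists>K\<in>\<A>. \<forall>X\<in>\<A>. K \<subseteq> X \<longrightarrow> X = K" by (rule subset_Zorn)
  then obtain K where K: "K \<in> \<A>" "\<And>X. X \<in> \<A> \<Longrightarrow> K \<subseteq> X \<Longrightarrow> X = K" by blast
  have "lattice_complete L K"
    unfolding lattice_complete_def
  proof
    assume "\<exists>K'. convex_body K' \<and> K \<subset> K' \<and> lattice_diam L K' = lattice_diam L K"
    then obtain K' where K': "convex_body K'" "K \<subset> K'" "lattice_diam L K' = lattice_diam L K" by blast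
    then have "K' \<in> \<A>" using K(1) by (auto simp: \<A>_def)
    then show False using K(2) K'(2) by blast
  qed
  then show ?thesis using that K(1) unfolding \<A>_def by blast
qed

section \<open>Lattice width and lattice reduced bodies\<close>

definition directional_width :: "'a::euclidean_space set \<Rightarrow> 'a \<Rightarrow> real" where
  "directional_width K y = Sup {y \<bullet> (a - b) | a b. a \<in> K \<and> b \<in> K}"

lemma lattice_width_eq_Inf_directional_width:
  "lattice_width L K = Inf {directional_width K y | y. y \<in> dual_lattice L - {0}}"
  by (simp add: lattice_width_def directional_width_def)

lemma directional_width_values_compact:
  assumes "compact K"
  shows "compact {y \<bullet> (a - b) | a b. a \<in> K \<and> b \<in> K}"
proof -
  have "{y \<bullet> (a - b) | a b. a \<in> K \<and> b \<in> K} = (\<lambda>z. y \<bullet> (fst z - snd z)) ` (K \<times> K)" by force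
  then show ?thesis
    using assms by (auto intro!: compact_continuous_image compact_Times continuous_intros)
qed

lemma directional_width_attained:
  assumes "compact K" "K \<noteq> {}"
  obtains a b where "a \<in> K" "b \<in> K" "directional_width K y = y \<bullet> (a - b)"
proof -
  let ?W = "{y \<bullet> (a - b) | a b. a \<in> K \<and> b \<in> K}"
  have "compact ?W" using assms(1) by (rule directional_width_values_compact)
  moreover have "?W \<noteq> {}" using assms(2) by blast
  ultimately have "Sup ?W \<in> ?W"
    by (intro closed_contains_Sup compact_imp_closed bounded_imp_bdd_above compact_imp_bounded)
  then show ?thesis using that by (auto simp: directional_width_def)
qed

lemma inner_diff_le_directional_width:
  assumes "compact K" "a \<in> K" "b \<in> K"
  shows "y \<bullet> (a - b) \<le> directional_width K y"
  unfolding directional_width_def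
  using assms directional_width_values_compact[OF assms(1), of y]
  by (intro cSup_upper bounded_imp_bdd_above compact_imp_bounded) auto

lemma directional_width_nonneg: "compact K \<Longrightarrow> K \<noteq> {} \<Longrightarrow> 0 \<le> directional_width K y"
  using inner_diff_le_directional_width[of K _ _ y] by fastforce

lemma directional_width_mono:
  assumes "K \<subseteq> K'" "compact K" "K \<noteq> {}" "compact K'"
  shows "directional_width K y \<le> directional_width K' y"
proof -
  obtain a b where "a \<in> K" "b \<in> K" "directional_width K y = y \<bullet> (a - b)"
    using directional_width_attained[OF assms(2,3)] .
  then show ?thesis using inner_diff_le_directional_width[OF assms(4)] assms(1) by auto
qed

lemma lattice_width_le_directional_width:
  assumes "compact K" "K \<noteq> {}" "y \<in> dual_lattice L" "y \<noteq> 0"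
  shows "lattice_width L K \<le> directional_width K y"
  unfolding lattice_width_eq_Inf_directional_width
  using assms directional_width_nonneg[OF assms(1,2)]
  by (intro cInf_lower) (auto simp: bdd_below_def)

lemma lattice_width_greatest:
  assumes L: "is_lattice L"
    and "\<And>y. y \<in> dual_lattice L \<Longrightarrow> y \<noteq> 0 \<Longrightarrow> w \<le> directional_width K y"
  shows "w \<le> lattice_width L K"
proof -
  obtain y where "y \<in> dual_lattice L" "y \<noteq> 0"
    using span_UNIV_nonzero span_dual_lattice[OF L] by blast
  then show ?thesis
    unfolding lattice_width_eq_Inf_directional_width using assms(2) by (intro cInf_greatest) auto
qed

lemma lattice_width_mono:
  assumes "is_lattice L" "K \<subseteq> K'" "compact K" "K \<noteq> {}" "compact K'"
  shows "lattice_width L K \<le> lattice_width L K'"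
proof (rule lattice_width_greatest[OF assms(1)])
  fix y assume "y \<in> dual_lattice L" "y \<noteq> 0"
  then show "lattice_width L K \<le> directional_width K' y"
    using lattice_width_le_directional_width[OF assms(3,4)] directional_width_mono[OF assms(2-5)]
    by (meson order_trans)
qed

lemma lattice_width_pos:
  assumes L: "is_lattice L" and K: "compact K" "interior K \<noteq> {}"
  shows "0 < lattice_width L K"
proof -
  obtain d where d: "d > 0" "\<And>y. y \<in> dual_lattice L \<Longrightarrow> y \<noteq> 0 \<Longrightarrow> d \<le> norm y"
    using dual_lattice_norm_lower_bound[OF L] by blast
  obtain c r where cr: "r > 0" "cball c r \<subseteq> K"
    using K(2) by (metis all_not_in_conv interior_subset open_contains_cball open_interior subset_trans)
  have "2 * r * d \<le> lattice_width L K"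
  proof (rule lattice_width_greatest[OF L])
    fix y assume y: "y \<in> dual_lattice L" "y \<noteq> 0"
    define a where "a = c + (r / norm y) *\<^sub>R y"
    define b where "b = c - (r / norm y) *\<^sub>R y"
    have ab: "a \<in> K" "b \<in> K" using cr y(2) by (auto simp: a_def b_def dist_norm)
    have "2 * r * d \<le> 2 * r * norm y" using d(2)[OF y] cr(1) by simp
    also have "\<dots> = y \<bullet> (a - b)"
      using y(2) by (simp add: a_def b_def inner_add_right dot_square_norm power2_eq_square)
    also have "\<dots> \<le> directional_width K y" using inner_diff_le_directional_width[OF K(1) ab] .
    finally show "2 * r * d \<le> directional_width K y" .
  qed
  moreover have "0 < 2 * r * d" using cr(1) d(1) by simp
  ultimately show ?thesis by linarith
qed

text \<open>Otherwise \<open>K\<close> lies in a hyperplane, and a dual lattice vector almost normal to it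
  has small width on \<open>K\<close>.\<close>
lemma interior_nonempty_if_lattice_width_pos:
  assumes L: "is_lattice L" and K: "compact K" "convex K" "K \<noteq> {}"
    and w: "0 < lattice_width L K"
  shows "interior K \<noteq> {}"
proof
  assume "interior K = {}"
  then obtain n \<beta> where n: "n \<noteq> 0" "K \<subseteq> {x. n \<bullet> x = \<beta>}"
    using empty_interior_subset_hyperplane[OF K(2)] by metis
  obtain R where R: "\<And>x. x \<in> K \<Longrightarrow> norm x \<le> R"
    using compact_imp_bounded[OF K(1)] bounded_iff by blast
  have R0: "0 \<le> R" using K(3) R norm_ge_zero order_trans by blast
  define \<epsilon> where "\<epsilon> = lattice_width L K / (2 * R + 1)"
  have \<epsilon>: "\<epsilon> > 0" using w R0 by (simp add: \<epsilon>_def)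
  obtain y m where y: "y \<in> dual_lattice L" "y \<noteq> 0" "norm (y - m *\<^sub>R n) < \<epsilon>"
    using lattice_vector_near_ray[OF is_lattice_dual_lattice[OF L] n(1) \<epsilon>] by blast
  obtain a b where ab: "a \<in> K" "b \<in> K" "directional_width K y = y \<bullet> (a - b)"
    using directional_width_attained[OF K(1,3)] by blast
  have "lattice_width L K \<le> y \<bullet> (a - b)"
    using lattice_width_le_directional_width[OF K(1,3) y(1,2)] ab(3) by simp
  also have "\<dots> = (y - m *\<^sub>R n) \<bullet> (a - b)"
    using ab(1,2) n(2) by (auto simp: inner_diff_left inner_diff_right)
  also have "\<dots> \<le> norm (y - m *\<^sub>R n) * norm (a - b)" by (rule norm_cauchy_schwarz)
  also have "\<dots> \<le> \<epsilon> * (2 * R)"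
  proof (rule mult_mono)
    show "norm (a - b) \<le> 2 * R"
      using R[OF ab(1)] R[OF ab(2)] norm_triangle_ineq4[of a b] by simp
  qed (use y(3) \<epsilon> in auto)
  also have "\<dots> < lattice_width L K" using w R0 by (simp add: \<epsilon>_def field_simps)
  finally show False by simp
qed

lemma Inter_chain_contains_wide_pair:
  assumes ne: "\<C> \<noteq> {}" and chain: "\<And>X Y. X \<in> \<C> \<Longrightarrow> Y \<in> \<C> \<Longrightarrow> X \<subseteq> Y \<or> Y \<subseteq> X"
    and \<C>: "\<And>M. M \<in> \<C> \<Longrightarrow> compact M \<and> M \<noteq> {} \<and> w \<le> directional_width M y"
  obtains a b where "a \<in> \<Inter>\<C>" "b \<in> \<Inter>\<C>" "w \<le> y \<bullet> (a - b)"
proof -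
  define S where "S M = (M \<times> M) \<inter> {z. w \<le> y \<bullet> (fst z - snd z)}" for M
  have "\<Inter>(S ` \<C>) \<noteq> {}"
  proof (rule compact_chain)
    show "compact T" if T: "T \<in> S ` \<C>" for T
    proof -
      obtain M where M: "M \<in> \<C>" "T = S M" using T by blast
      have "closed {z::'a \<times> 'a. w \<le> y \<bullet> (fst z - snd z)}"
        by (intro closed_Collect_le continuous_intros)
      then show ?thesis
        using \<C>[OF M(1)] unfolding M(2) S_def by (intro compact_Int_closed compact_Times) auto
    qed
    show "{} \<notin> S ` \<C>"
    proof
      assume "{} \<in> S ` \<C>"
      then obtain M where M: "M \<in> \<C>" "S M = {}" by auto
      obtain a b where "a \<in> M" "b \<in> M" "directional_width M y = y \<bullet> (a - b)"
        using directional_width_attained \<C>[OF M(1)] by metis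
      then have "(a, b) \<in> S M" using \<C>[OF M(1)] by (simp add: S_def)
      then show False using M(2) by simp
    qed
    show "T \<subseteq> T' \<or> T' \<subseteq> T" if TT': "T \<in> S ` \<C> \<and> T' \<in> S ` \<C>" for T T'
    proof -
      obtain X Y where XY: "X \<in> \<C>" "Y \<in> \<C>" "T = S X" "T' = S Y" using TT' by blast
      have "S X \<subseteq> S Y" if "X \<subseteq> Y" for X Y using that by (auto simp: S_def)
      then show ?thesis using chain[OF XY(1,2)] XY(3,4) by blast
    qed
  qed
  then obtain z where "z \<in> \<Inter>(S ` \<C>)" by blast
  then have "fst z \<in> \<Inter>\<C>" "snd z \<in> \<Inter>\<C>" "w \<le> y \<bullet> (fst z - snd z)"
    using ne by (auto simp: S_def mem_Times_iff)
  then show ?thesis using that by blast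
qed

lemma convex_body_Inter_chain:
  assumes L: "is_lattice L" and ne: "\<C> \<noteq> {}" and w: "0 < w"
    and chain: "\<And>X Y. X \<in> \<C> \<Longrightarrow> Y \<in> \<C> \<Longrightarrow> X \<subseteq> Y \<or> Y \<subseteq> X"
    and \<C>: "\<And>X. X \<in> \<C> \<Longrightarrow> convex_body X \<and> lattice_width L X = w"
  shows "convex_body (\<Inter>\<C>) \<and> lattice_width L (\<Inter>\<C>) = w"
proof -
  obtain M0 where M0: "M0 \<in> \<C>" using ne by blast
  have M: "compact M" "M \<noteq> {}" "convex M" "lattice_width L M = w" if "M \<in> \<C>" for M
    using \<C>[OF that] interior_subset[of M] by (auto simp: convex_body_def)
  have "closed (\<Inter>\<C>)" using M(1) by (intro closed_Inter) (auto intro: compact_imp_closed)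
  then have "compact (M0 \<inter> \<Inter>\<C>)" by (rule compact_Int_closed[OF M(1)[OF M0]])
  moreover have "M0 \<inter> \<Inter>\<C> = \<Inter>\<C>" using M0 by blast
  ultimately have cpt: "compact (\<Inter>\<C>)" by simp
  have cvx: "convex (\<Inter>\<C>)" using M(3) by (intro convex_Inter) auto
  have wide: "\<exists>a\<in>\<Inter>\<C>. \<exists>b\<in>\<Inter>\<C>. w \<le> y \<bullet> (a - b)" if y: "y \<in> dual_lattice L" "y \<noteq> 0" for y
  proof -
    have "compact M \<and> M \<noteq> {} \<and> w \<le> directional_width M y" if "M \<in> \<C>" for M
      using M[OF that] lattice_width_le_directional_width[OF M(1,2)[OF that] y] by simp
    then obtain a b where "a \<in> \<Inter>\<C>" "b \<in> \<Inter>\<C>" "w \<le> y \<bullet> (a - b)"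
      using Inter_chain_contains_wide_pair[OF ne chain] by blast
    then show ?thesis by blast
  qed
  obtain y where "y \<in> dual_lattice L" "y \<noteq> 0"
    using span_UNIV_nonzero span_dual_lattice[OF L] by blast
  then have "\<Inter>\<C> \<noteq> {}" using wide by blast
  have "lattice_width L (\<Inter>\<C>) = w"
  proof (rule antisym)
    show "lattice_width L (\<Inter>\<C>) \<le> w"
      using lattice_width_mono[OF L Inter_lower[OF M0] cpt \<open>\<Inter>\<C> \<noteq> {}\<close> M(1)[OF M0]] M(4)[OF M0]
      by simp
    show "w \<le> lattice_width L (\<Inter>\<C>)"
      using wide inner_diff_le_directional_width[OF cpt]
      by (intro lattice_width_greatest[OF L]) (meson order_trans)
  qed
  moreover have "interior (\<Inter>\<C>) \<noteq> {}"
    using interior_nonempty_if_lattice_width_pos[OF L cpt cvx \<open>\<Inter>\<C> \<noteq> {}\<close>] w calculation by simp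
  ultimately show ?thesis using cpt cvx by (simp add: convex_body_def)
qed

lemma subset_Zorn_dual:
  assumes "\<And>\<C>. subset.chain A \<C> \<Longrightarrow> \<exists>L\<in>A. \<forall>X\<in>\<C>. L \<subseteq> X"
  shows "\<exists>M\<in>A. \<forall>X\<in>A. X \<subseteq> M \<longrightarrow> X = M"
proof -
  have "\<exists>M\<in>uminus ` A. \<forall>X\<in>uminus ` A. M \<subseteq> X \<longrightarrow> X = M"
  proof (rule subset_Zorn)
    fix \<C> assume "subset.chain (uminus ` A) \<C>"
    then have "subset.chain A (uminus ` \<C>)"
      by (auto simp: subset_chain_def image_subset_iff)
    then obtain L where "L \<in> A" "\<forall>X\<in>uminus ` \<C>. L \<subseteq> X" using assms by blast
    then show "\<exists>U\<in>uminus ` A. \<forall>X\<in>\<C>. X \<subseteq> U" by (intro bexI[of _ "- L"]) auto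
  qed
  then show ?thesis by (metis Compl_subset_Compl_iff double_compl imageE imageI)
qed

lemma lattice_reduction_exists:
  assumes L: "is_lattice L" and C: "convex_body C"
  obtains M where "convex_body M" "M \<subseteq> C" "lattice_reduced L M"
    "lattice_width L M = lattice_width L C"
proof -
  define w where "w = lattice_width L C"
  define \<A> where "\<A> = {M. convex_body M \<and> M \<subseteq> C \<and> lattice_width L M = w}"
  have w: "0 < w" unfolding w_def using C by (intro lattice_width_pos[OF L]) (auto simp: convex_body_def)
  have "\<exists>I\<in>\<A>. \<forall>X\<in>\<C>. I \<subseteq> X" if ch: "subset.chain \<A> \<C>" for \<C>
  proof -
    have "convex_body (\<Inter>(insert C \<C>)) \<and> lattice_width L (\<Inter>(insert C \<C>)) = w"
    proof (rule convex_body_Inter_chain[OF L _ w])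
      show "X \<subseteq> Y \<or> Y \<subseteq> X" if "X \<in> insert C \<C>" "Y \<in> insert C \<C>" for X Y
        using that ch unfolding subset_chain_def \<A>_def by blast
      show "convex_body X \<and> lattice_width L X = w" if "X \<in> insert C \<C>" for X
        using that ch C by (auto simp: subset_chain_def \<A>_def w_def)
    qed simp
    moreover have "\<Inter>(insert C \<C>) \<subseteq> C" by blast
    ultimately have "\<Inter>(insert C \<C>) \<in> \<A>" by (simp add: \<A>_def)
    moreover have "\<forall>X\<in>\<C>. \<Inter>(insert C \<C>) \<subseteq> X" by blast
    ultimately show ?thesis by blast
  qed
  then have "\<exists>M\<in>\<A>. \<forall>X\<in>\<A>. X \<subseteq> M \<longrightarrow> X = M" by (rule subset_Zorn_dual)
  then obtain M where M: "M \<in> \<A>" "\<And>X. X \<in> \<A> \<Longrightarrow> X \<subseteq> M \<Longrightarrow> X = M" by blast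
  have "lattice_reduced L M"
    unfolding lattice_reduced_def
  proof
    assume "\<exists>M'. convex_body M' \<and> M' \<subset> M \<and> lattice_width L M' = lattice_width L M"
    then obtain M' where M': "convex_body M'" "M' \<subset> M" "lattice_width L M' = lattice_width L M" by blast
    then have "M' \<in> \<A>" using M(1) by (auto simp: \<A>_def)
    then show False using M(2) M'(2) by blast
  qed
  then show ?thesis using that M(1) unfolding \<A>_def w_def by blast
qed

theorem theorem3p20:
  fixes C L :: "'a::euclidean_space set"
  assumes "convex_body C" and "is_lattice L"
  shows "(\<exists>K. convex_body K \<and> C \<subseteq> K \<and> lattice_complete L K
              \<and> lattice_diam L K = lattice_diam L C)
       \<and> (\<exists>M. convex_body M \<and> M \<subseteq> C \<and> lattice_reduced L M
              \<and> lattice_width L M = lattice_width L C)"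
proof -
  obtain K where "convex_body K" "C \<subseteq> K" "lattice_complete L K"
      "lattice_diam L K = lattice_diam L C"
    using lattice_completion_exists[OF assms(2,1)] .
  moreover obtain M where "convex_body M" "M \<subseteq> C" "lattice_reduced L M"
      "lattice_width L M = lattice_width L C"
    using lattice_reduction_exists[OF assms(2,1)] .
  ultimately show ?thesis by blast
qed

end
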